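(* Let $A$ be a finite alphabet with $|A|=k$, and let $L\subseteq A^*$ be $n$-PT. Let $m=f_k(n)$. Then ${\uparrow}L$ is $m$-PT, while ${\uparrow}_<L$ and $\min(L)$ are $(m+1)$-PT.
   Context: For words $u,v$, $u\sqsubseteq v$ (subword) means $u=a_1\cdots a_\ell$ with letters $a_i$ and $v=v_0a_1v_1\cdots a_\ell v_\ell$ for some words $v_i$; $u\sqsubset v$ means $u\sqsubseteq v$ and $u\ne v$. ${\uparrow}L=\{v\in A^*~|~\exists u\in L: u\sqsubseteq v\}$, ${\uparrow}_<L=\{v~|~\exists u\in L: u\sqsubset v\}$, and $\min(L)=\{u\in L~|~\forall v\in L: v\not\sqsubset u\}$. For $n\in\mathbb{N}$, $u\sim_n v$ iff $u$ and $v$ have exactly the same subwords of length at most $n$; $L$ is $n$-PT if it is a union of $\sim_n$-classes. The functions $f_k$ ($k\geq1$) are defined by $f_1(n)=n$ and $f_{k+1}(n)=\max_{0\leq m\leq n}\bigl(m f_k(n+1-m)+m+f_k(n-m)\bigr)$. *)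

theory Defs
  imports "HOL-Library.Sublist"
begin

definition subwords_upto :: "nat \<Rightarrow> 'a list \<Rightarrow> 'a list set" where
  "subwords_upto n u = {w. subseq w u \<and> length w \<le> n}"

definition simon_equiv :: "nat \<Rightarrow> 'a list \<Rightarrow> 'a list \<Rightarrow> bool" where
  "simon_equiv n u v \<longleftrightarrow> subwords_upto n u = subwords_upto n v"

definition is_PT :: "'a set \<Rightarrow> nat \<Rightarrow> 'a list set \<Rightarrow> bool" where
  "is_PT A n L \<longleftrightarrow> L \<subseteq> lists A \<and>
     (\<forall>u\<in>lists A. \<forall>v\<in>lists A. simon_equiv n u v \<longrightarrow> (u \<in> L \<longleftrightarrow> v \<in> L))"

definition up_closure :: "'a set \<Rightarrow> 'a list set \<Rightarrow> 'a list set" where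
  "up_closure A L = {v \<in> lists A. \<exists>u\<in>L. subseq u v}"

definition strict_up_closure :: "'a set \<Rightarrow> 'a list set \<Rightarrow> 'a list set" where
  "strict_up_closure A L = {v \<in> lists A. \<exists>u\<in>L. strict_subseq u v}"

definition min_words :: "'a list set \<Rightarrow> 'a list set" where
  "min_words L = {u \<in> L. \<forall>v\<in>L. \<not> strict_subseq v u}"

text \<open>f k n as in the paper for k \<ge> 1 (value at k = 0 is an irrelevant convention).\<close>
fun fk :: "nat \<Rightarrow> nat \<Rightarrow> nat" where
  "fk 0 n = n"
| "fk (Suc 0) n = n"
| "fk (Suc (Suc k)) n =
     Max ((\<lambda>m. m * fk (Suc k) (n + 1 - m) + m + fk (Suc k) (n - m)) ` {0..n})"

end

theory Submission
  imports Defs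
begin

text \<open>
  If \<open>x a \<sim>\<^sub>p x\<close> and \<open>a y \<sim>\<^sub>q y\<close>, then deleting the letter \<open>a\<close> from \<open>x a y\<close> preserves its
  \<open>\<sim>\<^sub>p\<^sub>+\<^sub>q\<close>-class. Every word over \<open>k\<close> letters that is longer than \<open>f\<^sub>k(N)\<close> contains such a
  redundant letter with \<open>p + q \<ge> N\<close>: factor it into arches (shortest factors containing the
  whole alphabet). Either there are more than \<open>N\<close> arches, and then the last letter of the first
  arch is redundant because the rest of the word is \<open>N\<close>-rich, or some arch without its last
  letter is a long word over \<open>k - 1\<close> letters, which has a redundant letter by induction, and the
  richness of the surrounding arches raises its budget. Hence the minimal words of an \<open>n\<close>-PT
  language have length at most \<open>m = f\<^sub>k(n)\<close>, so membership in \<open>\<up>L = \<up>min(L)\<close> only depends on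
  the subwords of length \<open>\<le> m\<close>, membership in \<open>\<up>\<^sub><L\<close> on those of length \<open>\<le> m + 1\<close>, and
  \<open>min(L) = L - \<up>\<^sub><L\<close>.
\<close>

lemma subseq_rev_iff: "subseq (rev xs) (rev ys) \<longleftrightarrow> subseq xs ys"
proof -
  have rev: "subseq (rev xs) (rev ys)" if "subseq xs ys" for xs ys :: "'a list"
    using that by (induction rule: list_emb.induct) (auto intro: subseq_rev_drop_many)
  show ?thesis
    using rev[of xs ys] rev[of "rev xs" "rev ys"] by auto
qed

lemma subseq_in_lists: "subseq w u \<Longrightarrow> u \<in> lists B \<Longrightarrow> w \<in> lists B"
  by (induction rule: list_emb.induct) auto

lemma strict_subseq_length_less: "strict_subseq v w \<Longrightarrow> length v < length w"
  unfolding strict_subseq_def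
  by (metis le_neq_implies_less list_emb_length subseq_same_length)

lemma subseq_Suc_length_between:
  "subseq v w \<Longrightarrow> v \<noteq> w \<Longrightarrow> \<exists>v'. subseq v v' \<and> subseq v' w \<and> length v' = Suc (length v)"
proof (induction rule: list_emb.induct)
  case (list_emb_Nil ys)
  then obtain y ys' where "ys = y # ys'" by (cases ys) auto
  then show ?case by (intro exI[of _ "[y]"]) auto
next
  case (list_emb_Cons xs ys y)
  show ?case
  proof (cases "xs = ys")
    case True
    then show ?thesis by (intro exI[of _ "y # ys"]) auto
  next
    case False
    then obtain v' where "subseq xs v'" "subseq v' ys" "length v' = Suc (length xs)"
      using list_emb_Cons.IH by blast
    then show ?thesis by (intro exI[of _ v']) (auto intro: list_emb.list_emb_Cons)
  qed
next
  case (list_emb_Cons2 x y xs ys)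
  then obtain v' where "subseq xs v'" "subseq v' ys" "length v' = Suc (length xs)"
    by auto
  then show ?case using list_emb_Cons2 by (intro exI[of _ "x # v'"]) auto
qed

lemma min_words_below: "w \<in> L \<Longrightarrow> \<exists>w0\<in>min_words L. subseq w0 w"
proof (induction "length w" arbitrary: w rule: less_induct)
  case less
  show ?case
  proof (cases "w \<in> min_words L")
    case True
    then show ?thesis by auto
  next
    case False
    then obtain v where v: "v \<in> L" "strict_subseq v w"
      using less.prems unfolding min_words_def by auto
    then obtain w0 where "w0 \<in> min_words L" "subseq w0 v"
      using less.hyps strict_subseq_length_less by blast
    moreover have "subseq v w" using v(2) by (simp add: strict_subseq_def)
    ultimately show ?thesis using subseq_order.order_trans by blast
  qed
qed

lemma simon_equiv_iff:
  "simon_equiv n u v \<longleftrightarrow> (\<forall>w. length w \<le> n \<longrightarrow> (subseq w u \<longleftrightarrow> subseq w v))"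
  unfolding simon_equiv_def subwords_upto_def by blast

lemma simon_equiv_sym: "simon_equiv n u v \<Longrightarrow> simon_equiv n v u"
  unfolding simon_equiv_def by simp

lemma simon_equiv_mono: "simon_equiv n u v \<Longrightarrow> n' \<le> n \<Longrightarrow> simon_equiv n' u v"
  by (auto simp: simon_equiv_iff)

lemma simon_equiv_rev: "simon_equiv n (rev u) (rev v) \<longleftrightarrow> simon_equiv n u v"
  unfolding simon_equiv_iff by (metis length_rev rev_rev_ident subseq_rev_iff)

lemma is_PT_intro:
  assumes "L \<subseteq> lists A"
    and "\<And>u v. u \<in> lists A \<Longrightarrow> v \<in> lists A \<Longrightarrow> simon_equiv n u v \<Longrightarrow> u \<in> L \<Longrightarrow> v \<in> L"
  shows "is_PT A n L"
  unfolding is_PT_def using assms simon_equiv_sym by metis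

lemma is_PT_mem_iff:
  "is_PT A n L \<Longrightarrow> u \<in> lists A \<Longrightarrow> v \<in> lists A \<Longrightarrow> simon_equiv n u v \<Longrightarrow> u \<in> L \<longleftrightarrow> v \<in> L"
  unfolding is_PT_def by blast

definition rich :: "'a set \<Rightarrow> nat \<Rightarrow> 'a list \<Rightarrow> bool" where
  "rich B r z \<longleftrightarrow> (\<forall>x\<in>lists B. length x \<le> r \<longrightarrow> subseq x z)"

lemma rich_mono: "rich B r z \<Longrightarrow> r' \<le> r \<Longrightarrow> rich B r' z"
  by (auto simp: rich_def)

lemma rich_subseq: "rich B r z \<Longrightarrow> subseq z z' \<Longrightarrow> rich B r z'"
  by (auto simp: rich_def intro: subseq_order.order_trans)

lemma rich_one: "B \<subseteq> set z \<Longrightarrow> rich B 1 z"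
  unfolding rich_def by (auto simp: length_Suc_conv subseq_singleton_left le_Suc_eq)

lemma rich_append: "rich B r1 z1 \<Longrightarrow> rich B r2 z2 \<Longrightarrow> rich B (r1 + r2) (z1 @ z2)"
  unfolding rich_def
proof (intro ballI impI)
  fix x
  assume "\<forall>x\<in>lists B. length x \<le> r1 \<longrightarrow> subseq x z1" "\<forall>x\<in>lists B. length x \<le> r2 \<longrightarrow> subseq x z2"
    and "x \<in> lists B" "length x \<le> r1 + r2"
  moreover have "take r1 x \<in> lists B" "drop r1 x \<in> lists B"
    using \<open>x \<in> lists B\<close> by (auto simp: in_lists_conv_set dest: in_set_takeD in_set_dropD)
  ultimately have "subseq (take r1 x) z1" "subseq (drop r1 x) z2"
    by auto
  then show "subseq x (z1 @ z2)"
    by (metis append_take_drop_id list_emb_append_mono)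
qed

lemma rich_rev: "rich B r z \<Longrightarrow> rich B r (rev z)"
  unfolding rich_def by (metis length_rev rev_rev_ident subseq_rev_iff set_rev in_lists_conv_set)

text \<open>
  A subword of \<open>z s\<close> of length \<open>\<le> p + r\<close> can be split so that its last \<open>p\<close> letters embed into
  \<open>s\<close> and the at most \<open>r\<close> letters before them into the \<open>r\<close>-rich word \<open>z\<close>.
\<close>

lemma subseq_rich_prefix:
  assumes "simon_equiv p s t" and "rich B r z" and "z @ s \<in> lists B"
    and "subseq w (z @ s)" and "length w \<le> p + r"
  shows "subseq w (z @ t)"
proof -
  obtain w1 w2 where w: "w = w1 @ w2" "subseq w1 z" "subseq w2 s"
    using assms(4) by (auto elim: subseq_appendE)
  show ?thesis
  proof (cases "length w2 \<le> p")
    case True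
    then have "subseq w2 t" using assms(1) w(3) by (auto simp: simon_equiv_iff)
    then show ?thesis using w by (simp add: list_emb_append_mono)
  next
    case False
    define j where "j = length w - p"
    have "w \<in> lists B" using assms(3,4) subseq_in_lists by blast
    then have "take j w \<in> lists B"
      by (auto simp: in_lists_conv_set dest: in_set_takeD)
    then have "subseq (take j w) z"
      using assms(2,5) by (auto simp: rich_def j_def)
    moreover have "drop j w = drop (j - length w1) w2"
      using False w(1) j_def by simp
    then have "subseq (drop j w) s"
      using w(3) by (metis subseq_order.order_trans suffix_drop suffix_imp_subseq)
    then have "subseq (drop j w) t"
      using assms(1) by (auto simp: simon_equiv_iff j_def)
    ultimately show ?thesis by (metis append_take_drop_id list_emb_append_mono)
  qed
qed

lemma simon_equiv_rich_prefix:
  assumes "simon_equiv p s t" and "rich B r z" and "z @ s \<in> lists B" and "z @ t \<in> lists B"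
  shows "simon_equiv (p + r) (z @ s) (z @ t)"
proof -
  have "subseq w (z @ t)" if "subseq w (z @ s)" "length w \<le> p + r" for w
    using subseq_rich_prefix[OF assms(1-3) that] .
  moreover have "subseq w (z @ s)" if "subseq w (z @ t)" "length w \<le> p + r" for w
    using subseq_rich_prefix[OF simon_equiv_sym[OF assms(1)] assms(2,4) that] .
  ultimately show ?thesis unfolding simon_equiv_iff by blast
qed

lemma simon_equiv_rich_suffix:
  assumes "simon_equiv p s t" and "rich B r z" and "s @ z \<in> lists B" and "t @ z \<in> lists B"
  shows "simon_equiv (p + r) (s @ z) (t @ z)"
proof -
  have "simon_equiv (p + r) (rev z @ rev s) (rev z @ rev t)"
    using assms by (intro simon_equiv_rich_prefix[OF _ rich_rev]) (auto simp: simon_equiv_rev)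
  then show ?thesis using simon_equiv_rev[of "p + r" "s @ z" "t @ z"] by simp
qed

definition redundant_letter :: "nat \<Rightarrow> 'a list \<Rightarrow> bool" where
  "redundant_letter N u \<longleftrightarrow> (\<exists>x a y p q. u = x @ a # y \<and> simon_equiv p (x @ [a]) x \<and>
      simon_equiv q (a # y) y \<and> N \<le> p + q)"

lemma simon_equiv_delete_redundant_letter:
  assumes "redundant_letter N u"
  shows "\<exists>x a y. u = x @ a # y \<and> simon_equiv N (x @ y) u"
proof -
  obtain x a y p q where u: "u = x @ a # y" and p: "simon_equiv p (x @ [a]) x"
    and q: "simon_equiv q (a # y) y" and N: "N \<le> p + q"
    using assms unfolding redundant_letter_def by blast
  have delete: "subseq w (x @ y)" if w: "subseq w (x @ a # y)" "length w \<le> N" for w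
  proof -
    obtain w1 w2 where w12: "w = w1 @ w2" "subseq w1 x" "subseq w2 (a # y)"
      using w(1) by (auto elim: subseq_appendE)
    show ?thesis
    proof (cases "length w2 \<le> q")
      case True
      then have "subseq w2 y" using q w12(3) by (auto simp: simon_equiv_iff)
      then show ?thesis using w12 by (simp add: list_emb_append_mono)
    next
      case False
      then have "length (w1 @ [a]) \<le> p"
        using w12(1) w(2) N by simp
      moreover have "subseq (w1 @ [a]) (x @ [a])"
        using w12(2) by simp
      ultimately have "subseq (w1 @ [a]) x"
        using p unfolding simon_equiv_iff by blast
      then have "subseq (w1 @ a # y) (x @ y)"
        using subseq_append[of "w1 @ [a]" y x] by simp
      moreover have "subseq (w1 @ w2) (w1 @ a # y)"
        using w12(3) by (simp only: subseq_append')
      ultimately show ?thesis using w12(1) by (metis subseq_order.order_trans)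
    qed
  qed
  have "subseq (x @ y) (x @ a # y)"
    by (metis subseq_append' subseq_Cons' subseq_order.refl)
  then have "simon_equiv N (x @ y) u"
    unfolding simon_equiv_iff u using delete subseq_order.order_trans by blast
  then show ?thesis using u by blast
qed

lemma redundant_letter_rich_prefix:
  assumes "redundant_letter N u" and "rich B r z" and "z @ u \<in> lists B"
  shows "redundant_letter (N + r) (z @ u)"
proof -
  obtain x a y p q where u: "u = x @ a # y" "simon_equiv p (x @ [a]) x"
    "simon_equiv q (a # y) y" "N \<le> p + q"
    using assms(1) unfolding redundant_letter_def by blast
  have "simon_equiv (p + r) (z @ x @ [a]) (z @ x)"
    using assms(2,3) u by (intro simon_equiv_rich_prefix) auto
  then show ?thesis
    unfolding redundant_letter_def using u
    by (intro exI[of _ "z @ x"] exI[of _ a] exI[of _ y] exI[of _ "p + r"] exI[of _ q]) auto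
qed

lemma redundant_letter_rich_suffix:
  assumes "redundant_letter N u" and "rich B r z" and "u @ z \<in> lists B"
  shows "redundant_letter (N + r) (u @ z)"
proof -
  obtain x a y p q where u: "u = x @ a # y" "simon_equiv p (x @ [a]) x"
    "simon_equiv q (a # y) y" "N \<le> p + q"
    using assms(1) unfolding redundant_letter_def by blast
  have "simon_equiv (q + r) (a # y @ z) (y @ z)"
    using simon_equiv_rich_suffix[OF u(3) assms(2)] assms(3) u(1) by auto
  then show ?thesis
    unfolding redundant_letter_def using u
    by (intro exI[of _ x] exI[of _ a] exI[of _ "y @ z"] exI[of _ p] exI[of _ "q + r"]) auto
qed

inductive arches :: "'a set \<Rightarrow> nat \<Rightarrow> 'a list \<Rightarrow> bool" for B where
  arches_0: "v \<in> lists B \<Longrightarrow> b \<in> B \<Longrightarrow> b \<notin> set v \<Longrightarrow> arches B 0 v"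
| arches_Suc: "c \<in> B \<Longrightarrow> c \<notin> set u \<Longrightarrow> u \<in> lists B \<Longrightarrow> B \<subseteq> insert c (set u) \<Longrightarrow>
    arches B m w \<Longrightarrow> arches B (Suc m) (u @ c # w)"

lemma arches_lists: "arches B m w \<Longrightarrow> w \<in> lists B"
  by (induction rule: arches.induct) auto

lemma arches_rich: "arches B m w \<Longrightarrow> rich B m w"
proof (induction rule: arches.induct)
  case (arches_0 v b)
  then show ?case by (auto simp: rich_def)
next
  case (arches_Suc c u m w)
  then have "rich B 1 (u @ [c])" by (intro rich_one) auto
  from rich_append[OF this arches_Suc.IH] show ?case by simp
qed

lemma split_first_arch:
  "B \<noteq> {} \<Longrightarrow> B \<subseteq> set u \<Longrightarrow> \<exists>u1 c w. u = u1 @ c # w \<and> c \<in> B \<and> c \<notin> set u1 \<and> B \<subseteq> insert c (set u1)"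
proof (induction u rule: rev_induct)
  case Nil
  then show ?case by simp
next
  case (snoc x u)
  show ?case
  proof (cases "B \<subseteq> set u")
    case True
    then obtain u1 c w where "u = u1 @ c # w" "c \<in> B" "c \<notin> set u1" "B \<subseteq> insert c (set u1)"
      using snoc.IH snoc.prems(1) by blast
    then show ?thesis by (intro exI[of _ u1] exI[of _ c] exI[of _ "w @ [x]"]) auto
  next
    case False
    then show ?thesis using snoc.prems by (intro exI[of _ u] exI[of _ x] exI[of _ "[]"]) auto
  qed
qed

lemma arches_exist:
  assumes "B \<noteq> {}"
  shows "u \<in> lists B \<Longrightarrow> \<exists>m. arches B m u"
proof (induction "length u" arbitrary: u rule: less_induct)
  case less
  show ?case
  proof (cases "B \<subseteq> set u")
    case False
    then obtain b where "b \<in> B" "b \<notin> set u" by blast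
    then show ?thesis using arches_0[OF less.prems] by blast
  next
    case True
    then obtain u1 c w where u: "u = u1 @ c # w" "c \<in> B" "c \<notin> set u1" "B \<subseteq> insert c (set u1)"
      using split_first_arch[OF assms True] by blast
    have "length w < length u" "u1 \<in> lists B" "w \<in> lists B"
      using u(1) less.prems by auto
    then obtain m where "arches B m w" using less.hyps by blast
    then have "arches B (Suc m) u"
      using arches_Suc[OF u(2,3) \<open>u1 \<in> lists B\<close> u(4)] u(1) by simp
    then show ?thesis by blast
  qed
qed

lemma redundant_letter_many_arches: "arches B m u \<Longrightarrow> N < m \<Longrightarrow> redundant_letter N u"
proof (induction rule: arches.induct)
  case (arches_0 v b)
  then show ?case by simp
next
  case (arches_Suc c u m w)
  have "rich B N w" using arches_rich[OF arches_Suc.hyps(5)] arches_Suc.prems by (auto intro: rich_mono)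
  moreover have "[c] @ w \<in> lists B" "[] @ w \<in> lists B"
    using arches_Suc.hyps(1) arches_lists[OF arches_Suc.hyps(5)] by auto
  ultimately have "simon_equiv (0 + N) ([c] @ w) ([] @ w)"
    by (intro simon_equiv_rich_suffix) (auto simp: simon_equiv_iff)
  moreover have "simon_equiv 0 (u @ [c]) u" by (auto simp: simon_equiv_iff)
  ultimately show ?case
    unfolding redundant_letter_def
    by (intro exI[of _ u] exI[of _ c] exI[of _ w] exI[of _ 0] exI[of _ N]) auto
qed

text \<open>The recursion of \<open>fk\<close>, started at the empty alphabet, which admits no nonempty word.\<close>

fun fk0 :: "nat \<Rightarrow> nat \<Rightarrow> nat" where
  "fk0 0 n = 0"
| "fk0 (Suc k) n = Max ((\<lambda>m. m * fk0 k (n + 1 - m) + m + fk0 k (n - m)) ` {0..n})"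

lemma fk0_Suc_ge: "m \<le> n \<Longrightarrow> m * fk0 k (n + 1 - m) + m + fk0 k (n - m) \<le> fk0 (Suc k) n"
  by (auto intro: Max_ge)

lemma fk0_eq_fk: "k \<ge> 1 \<Longrightarrow> fk0 k n = fk k n"
proof (induction k arbitrary: n)
  case 0
  then show ?case by simp
next
  case (Suc k)
  show ?case
  proof (cases k)
    case 0
    have "fk0 (Suc 0) n = Max {0..n}" by (simp add: image_ident)
    also have "\<dots> = n" by (rule Max_eqI) auto
    finally show ?thesis using 0 by simp
  next
    case (Suc k')
    then have IH: "\<And>n. fk0 k n = fk k n" using Suc.IH by simp
    have "fk0 (Suc k) n = Max ((\<lambda>m. m * fk0 k (n + 1 - m) + m + fk0 k (n - m)) ` {0..n})"
      by (rule fk0.simps(2))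
    also have "\<dots> = Max ((\<lambda>m. m * fk k (n + 1 - m) + m + fk k (n - m)) ` {0..n})"
      by (simp only: IH)
    also have "\<dots> = fk (Suc k) n"
      using \<open>k = Suc k'\<close> by (simp only: fk.simps(3))
    finally show ?thesis .
  qed
qed

lemma le_fk: "n \<le> fk k n"
proof (cases "(k, n)" rule: fk.cases)
  case (3 k n)
  have "n \<le> n * fk (Suc k) (n + 1 - n) + n + fk (Suc k) (n - n)" by simp
  also have "\<dots> \<le> fk (Suc (Suc k)) n"
    unfolding fk.simps by (intro Max_ge finite_imageI image_eqI[where x = n]) auto
  finally show ?thesis using 3 by simp
qed auto

lemma redundant_letter_arches:
  fixes B :: "'a set"
  assumes fin: "finite B" and card: "card B \<le> Suc k"
    and IH: "\<And>(B' :: 'a set) u N. finite B' \<Longrightarrow> card B' \<le> k \<Longrightarrow> u \<in> lists B' \<Longrightarrow>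
      fk0 k N < length u \<Longrightarrow> redundant_letter N u"
  shows "arches B m u \<Longrightarrow> m * fk0 k (Suc N) + m + fk0 k N < length u \<Longrightarrow>
    redundant_letter (N + m) u"
proof (induction rule: arches.induct)
  case (arches_0 v b)
  have "v \<in> lists (B - {b})" "card (B - {b}) \<le> k"
    using arches_0.hyps fin card by auto
  then show ?case using IH[of "B - {b}" v N] fin arches_0.prems by simp
next
  case (arches_Suc c u m w)
  show ?case
  proof (cases "fk0 k (Suc N) < length u")
    case True
    have "u \<in> lists (B - {c})" "card (B - {c}) \<le> k"
      using arches_Suc.hyps(1-3) fin card by auto
    then have "redundant_letter (Suc N) u" using IH[of "B - {c}" u "Suc N"] fin True by simp
    moreover have "rich B m (c # w)"
      using arches_rich[OF arches_Suc.hyps(5)] by (rule rich_subseq) auto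
    ultimately have "redundant_letter (Suc N + m) (u @ c # w)"
      using arches_Suc.hyps(1,3) arches_lists[OF arches_Suc.hyps(5)]
      by (intro redundant_letter_rich_suffix) auto
    then show ?thesis by simp
  next
    case False
    then have "redundant_letter (N + m) w" using arches_Suc.prems arches_Suc.IH by simp
    moreover have "rich B 1 (u @ [c])" using arches_Suc.hyps(1,4) by (intro rich_one) auto
    ultimately have "redundant_letter (N + m + 1) ((u @ [c]) @ w)"
      using arches_Suc.hyps(1,3) arches_lists[OF arches_Suc.hyps(5)]
      by (intro redundant_letter_rich_prefix) auto
    then show ?thesis by simp
  qed
qed

lemma long_word_redundant_letter:
  "finite B \<Longrightarrow> card B \<le> k \<Longrightarrow> u \<in> lists B \<Longrightarrow> fk0 k N < length u \<Longrightarrow> redundant_letter N u"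
proof (induction k arbitrary: B u N)
  case 0
  then show ?case by simp
next
  case (Suc k)
  obtain a where "a \<in> set u" using Suc.prems(4) by (cases u) auto
  then have "B \<noteq> {}" using Suc.prems(3) by (auto simp: in_lists_conv_set)
  then obtain m where arches: "arches B m u" using arches_exist[OF _ Suc.prems(3)] by blast
  show ?case
  proof (cases "N < m")
    case True
    then show ?thesis using redundant_letter_many_arches[OF arches] by simp
  next
    case False
    then have "m * fk0 k (Suc (N - m)) + m + fk0 k (N - m) \<le> fk0 (Suc k) N"
      using fk0_Suc_ge[of m N k] by (simp add: Suc_diff_le)
    then have bound: "m * fk0 k (Suc (N - m)) + m + fk0 k (N - m) < length u"
      using Suc.prems(4) by linarith
    have "redundant_letter (N - m + m) u"
      by (rule redundant_letter_arches[OF Suc.prems(1,2) _ arches bound]) (fact Suc.IH)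
    then show ?thesis using False by simp
  qed
qed

lemma min_words_length_le:
  assumes "finite A" and "card A \<le> k" and "k \<ge> 1" and "is_PT A n L" and "u \<in> min_words L"
  shows "length u \<le> fk k n"
proof (rule ccontr)
  assume "\<not> length u \<le> fk k n"
  then have long: "fk0 k n < length u" using fk0_eq_fk[OF assms(3)] by simp
  have u: "u \<in> L" "u \<in> lists A"
    using assms(4,5) unfolding min_words_def is_PT_def by auto
  then have "redundant_letter n u"
    using long_word_redundant_letter[OF assms(1,2) _ long] by blast
  then obtain x a y where xay: "u = x @ a # y" and "simon_equiv n (x @ y) u"
    using simon_equiv_delete_redundant_letter by blast
  moreover have "x @ y \<in> lists A" using u(2) xay by simp
  ultimately have "x @ y \<in> L" using is_PT_mem_iff[OF assms(4)] u by blast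
  moreover have "strict_subseq (x @ y) u"
    unfolding strict_subseq_def xay by (auto intro!: list_emb_append_mono)
  ultimately show False using assms(5) unfolding min_words_def by blast
qed

lemma is_PT_up_closure:
  assumes "\<And>w. w \<in> min_words L \<Longrightarrow> length w \<le> m"
  shows "is_PT A m (up_closure A L)"
proof (rule is_PT_intro)
  show "up_closure A L \<subseteq> lists A" by (auto simp: up_closure_def)
  fix u v
  assume v: "v \<in> lists A" and uv: "simon_equiv m u v" and "u \<in> up_closure A L"
  then obtain w where "w \<in> L" "subseq w u" unfolding up_closure_def by blast
  then obtain w0 where w0: "w0 \<in> min_words L" "subseq w0 u"
    using min_words_below subseq_order.order_trans by blast
  then have "subseq w0 v" using assms uv by (auto simp: simon_equiv_iff)
  then show "v \<in> up_closure A L" using v w0 unfolding up_closure_def min_words_def by auto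
qed

lemma is_PT_strict_up_closure:
  assumes "\<And>w. w \<in> min_words L \<Longrightarrow> length w \<le> m"
  shows "is_PT A (m + 1) (strict_up_closure A L)"
proof (rule is_PT_intro)
  show "strict_up_closure A L \<subseteq> lists A" by (auto simp: strict_up_closure_def)
  fix u v
  assume v: "v \<in> lists A" and uv: "simon_equiv (m + 1) u v" and "u \<in> strict_up_closure A L"
  then obtain w where "w \<in> L" "strict_subseq w u" unfolding strict_up_closure_def by blast
  then obtain w0 where w0: "w0 \<in> min_words L" "strict_subseq w0 u"
    using min_words_below subseq_order.le_less_trans by blast
  then obtain w' where w': "subseq w0 w'" "subseq w' u" "length w' = Suc (length w0)"
    using subseq_Suc_length_between unfolding strict_subseq_def by blast
  then have "subseq w' v" using assms[OF w0(1)] uv by (auto simp: simon_equiv_iff)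
  moreover have "length w0 < length v" using list_emb_length[OF \<open>subseq w' v\<close>] w'(3) by simp
  ultimately have "strict_subseq w0 v"
    unfolding strict_subseq_def using subseq_order.order_trans[OF w'(1)] by auto
  then show "v \<in> strict_up_closure A L"
    using v w0 unfolding strict_up_closure_def min_words_def by auto
qed

lemma is_PT_min_words:
  assumes L: "is_PT A n L" and "n \<le> N" and up: "is_PT A N (strict_up_closure A L)"
  shows "is_PT A N (min_words L)"
proof (rule is_PT_intro)
  have LA: "L \<subseteq> lists A" using L unfolding is_PT_def by blast
  then show "min_words L \<subseteq> lists A" unfolding min_words_def by auto
  have min_words_iff: "u \<in> min_words L \<longleftrightarrow> u \<in> L \<and> u \<notin> strict_up_closure A L"
    if "u \<in> lists A" for u
    using that LA unfolding min_words_def strict_up_closure_def by auto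
  fix u v
  assume uv: "u \<in> lists A" "v \<in> lists A" "simon_equiv N u v" and "u \<in> min_words L"
  moreover have "u \<in> L \<longleftrightarrow> v \<in> L"
    using is_PT_mem_iff[OF L uv(1,2) simon_equiv_mono[OF uv(3) \<open>n \<le> N\<close>]] .
  moreover have "u \<in> strict_up_closure A L \<longleftrightarrow> v \<in> strict_up_closure A L"
    using is_PT_mem_iff[OF up uv] .
  ultimately show "v \<in> min_words L" using min_words_iff by blast
qed

theorem theorem11:
  fixes A :: "'a set" and L :: "'a list set" and k n m :: nat
  assumes "finite A" and "card A = k" and "k \<ge> 1"
    and "is_PT A n L"
    and "m = fk k n"
  shows "is_PT A m (up_closure A L) \<and>
         is_PT A (m + 1) (strict_up_closure A L) \<and>
         is_PT A (m + 1) (min_words L)"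
proof -
  have min_length: "\<And>w. w \<in> min_words L \<Longrightarrow> length w \<le> m"
    using min_words_length_le assms by blast
  have strict: "is_PT A (m + 1) (strict_up_closure A L)"
    by (rule is_PT_strict_up_closure[OF min_length])
  have "n \<le> m + 1" using le_fk[of n k] assms(5) by simp
  from this strict have "is_PT A (m + 1) (min_words L)"
    by (rule is_PT_min_words[OF assms(4)])
  with strict show ?thesis using is_PT_up_closure[OF min_length] by blast
qed

end
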